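(* Let $n=25$. The only effective divisor classes $D$ on $X$ with $\chi(D)\ge2$ and $2B\cdot D<B\cdot K$ are the classes $H-E_i$, $1\le i\le 25$.
   Context: Let $X$ be the blowup of $\mathbb{P}^2_{\mathbb{C}}$ at $n$ very general points, with $H$ the pullback of a line class, $E_i$ the exceptional divisors, $E=\sum_iE_i$, and $K=K_X=-3H+E$; $B=\sqrt nH-E$ (so $B=5H-E$ for $n=25$). Write $\chi(D)=\chi(\mathcal{O}_X(D))$; effective means the class of an effective divisor. *)

theory Defs
  imports Complex_Main "HOL-Library.Countable_Set"
begin

(* Divisor classes on X = Bl_{p_1..p_n} P^2 are written D = d H - sum_{i=1..n} m i E_i,
   with d :: int and m :: nat => int (only the values m 1, ..., m n matter). *)

definition ffall :: "nat \<Rightarrow> nat \<Rightarrow> nat" where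
  "ffall a k = (if k \<le> a then fact a div fact (a - k) else 0)"

(* A ternary form of degree d is F = sum_{a+b<=d} c a b * x^a y^b z^(d-a-b).
   hderiv d c (k1,k2,k3) p is the value at p of d^(k1+k2+k3) F / dx^k1 dy^k2 dz^k3. *)
definition hderiv :: "nat \<Rightarrow> (nat \<Rightarrow> nat \<Rightarrow> complex) \<Rightarrow> nat \<Rightarrow> nat \<Rightarrow> nat
      \<Rightarrow> complex \<times> complex \<times> complex \<Rightarrow> complex" where
  "hderiv d c k1 k2 k3 p =
     (\<Sum>a\<le>d. \<Sum>b\<le>d - a. c a b * of_nat (ffall a k1 * ffall b k2 * ffall (d - a - b) k3)
        * fst p ^ (a - k1) * fst (snd p) ^ (b - k2) * snd (snd p) ^ (d - a - b - k3))"

definition nonzero_form :: "nat \<Rightarrow> (nat \<Rightarrow> nat \<Rightarrow> complex) \<Rightarrow> bool" where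
  "nonzero_form d c \<longleftrightarrow> (\<exists>a b. a + b \<le> d \<and> c a b \<noteq> 0)"

(* the form has multiplicity >= m at p (char 0: all partials of order < m vanish);
   trivially true if m <= 0 *)
definition mult_ge :: "nat \<Rightarrow> (nat \<Rightarrow> nat \<Rightarrow> complex) \<Rightarrow> complex \<times> complex \<times> complex \<Rightarrow> int \<Rightarrow> bool" where
  "mult_ge d c p m \<longleftrightarrow> (\<forall>k1 k2 k3. int (k1 + k2 + k3) < m \<longrightarrow> hderiv d c k1 k2 k3 p = 0)"

(* d H - sum m_i E_i is the class of an effective divisor on the blowup of P^2 at P 1, ..., P n:
   d >= 0 and there is a nonzero degree-d plane curve with multiplicity >= m_i at P i
   (an effective divisor is a strict transform plus nonnegative combination of the E_i). *)
definition effective :: "nat \<Rightarrow> (nat \<Rightarrow> complex \<times> complex \<times> complex) \<Rightarrow> int \<Rightarrow> (nat \<Rightarrow> int) \<Rightarrow> bool" where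
  "effective n P d m \<longleftrightarrow> d \<ge> 0 \<and> (\<exists>c. nonzero_form (nat d) c \<and> (\<forall>i\<in>{1..n}. mult_ge (nat d) c (P i) (m i)))"

(* intersection form: H^2 = 1, E_i^2 = -1, H.E_i = 0, E_i.E_j = 0 *)
definition inter :: "nat \<Rightarrow> int \<times> (nat \<Rightarrow> int) \<Rightarrow> int \<times> (nat \<Rightarrow> int) \<Rightarrow> int" where
  "inter n D D' = fst D * fst D' - (\<Sum>i\<in>{1..n}. snd D i * snd D' i)"

(* K = -3H + E *)
definition canon :: "int \<times> (nat \<Rightarrow> int)" where
  "canon = (-3, \<lambda>i. -1)"

(* chi(O_X(D)) via Riemann-Roch on the rational surface X: chi(D) = 1 + (D.D - D.K)/2 *)
definition chi :: "nat \<Rightarrow> int \<times> (nat \<Rightarrow> int) \<Rightarrow> int" where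
  "chi n D = 1 + (inter n D D - inter n D canon) div 2"

(* multivariate polynomials in variables v 0, ..., v (N-1), as finitely supported coefficient functions
   on exponent vectors *)
definition mp_support :: "((nat \<Rightarrow> nat) \<Rightarrow> complex) \<Rightarrow> (nat \<Rightarrow> nat) set" where
  "mp_support f = {\<alpha>. f \<alpha> \<noteq> 0}"

definition is_nonzero_mpoly :: "nat \<Rightarrow> ((nat \<Rightarrow> nat) \<Rightarrow> complex) \<Rightarrow> bool" where
  "is_nonzero_mpoly N f \<longleftrightarrow> finite (mp_support f) \<and> mp_support f \<noteq> {}
      \<and> (\<forall>\<alpha>\<in>mp_support f. \<forall>j\<ge>N. \<alpha> j = 0)"

definition mp_eval :: "nat \<Rightarrow> ((nat \<Rightarrow> nat) \<Rightarrow> complex) \<Rightarrow> (nat \<Rightarrow> complex) \<Rightarrow> complex" where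
  "mp_eval N f v = (\<Sum>\<alpha>\<in>mp_support f. f \<alpha> * (\<Prod>j<N. v j ^ \<alpha> j))"

(* Q holds for very general v in C^N: outside a countable union of proper Zariski closed subsets
   (each contained in a hypersurface) *)
definition very_general :: "nat \<Rightarrow> ((nat \<Rightarrow> complex) \<Rightarrow> bool) \<Rightarrow> bool" where
  "very_general N Q \<longleftrightarrow> (\<exists>S. countable S \<and> (\<forall>f\<in>S. is_nonzero_mpoly N f)
      \<and> (\<forall>v. (\<forall>f\<in>S. mp_eval N f v \<noteq> 0) \<longrightarrow> Q v))"

definition pts :: "(nat \<Rightarrow> complex) \<Rightarrow> nat \<Rightarrow> complex \<times> complex \<times> complex" where
  "pts v i = (v (2 * (i - 1)), v (2 * (i - 1) + 1), 1)"

end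

theory Submission
  imports Defs "HOL-Analysis.Convex"
begin

text \<open>
  Write \<open>D = d H - \<Sum> m\<^sub>i E\<^sub>i\<close>, \<open>s = \<Sum> m\<^sub>i\<close> and \<open>q = \<Sum> m\<^sub>i\<^sup>2\<close>. Then \<open>\<chi>(D) \<ge> 2\<close> reads
  \<open>d\<^sup>2 + 3d - q - s \<ge> 2\<close> and \<open>2B\<cdot>D < B\<cdot>K\<close> reads \<open>s \<ge> 5d - 4\<close>. For integers \<open>|s| \<le> q\<close>,
  and Cauchy-Schwarz gives \<open>s\<^sup>2 \<le> 25q\<close>; for \<open>d \<ge> 0\<close> these bounds leave only \<open>d = 1\<close> and
  \<open>s = q = 1\<close>, i.e. \<open>D = H - E\<^sub>i\<close>. Effectivity enters only through \<open>d \<ge> 0\<close>, and \<open>H - E\<^sub>i\<close>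
  is effective for any position of the points (a line through \<open>P\<^sub>i\<close>), so the equivalence holds
  for every configuration and the exceptional family in \<^const>\<open>very_general\<close> can be empty.
\<close>

lemma sum_squared_le_card_mult_sum_squares_int:
  fixes f :: "'a \<Rightarrow> int"
  shows "(\<Sum>i\<in>A. f i)\<^sup>2 \<le> int (card A) * (\<Sum>i\<in>A. (f i)\<^sup>2)"
proof -
  have "real_of_int ((\<Sum>i\<in>A. f i)\<^sup>2) \<le> real_of_int (int (card A) * (\<Sum>i\<in>A. (f i)\<^sup>2))"
    using sum_squared_le_sum_of_squares[of "\<lambda>i. real_of_int (f i)" A] by (simp add: mult.commute)
  then show ?thesis
    by (simp only: of_int_le_iff)
qed

lemma abs_le_square_int: "\<bar>x\<bar> \<le> (x::int)\<^sup>2"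
proof (cases "x = 0")
  case False
  then have "\<bar>x\<bar> * 1 \<le> \<bar>x\<bar> * \<bar>x\<bar>"
    by (intro mult_left_mono) auto
  then show ?thesis
    by (simp add: power2_eq_square abs_mult_self_eq)
qed simp

lemma abs_sum_le_sum_squares_int:
  fixes f :: "'a \<Rightarrow> int"
  shows "\<bar>\<Sum>i\<in>A. f i\<bar> \<le> (\<Sum>i\<in>A. (f i)\<^sup>2)"
  using sum_abs[of f A] sum_mono[of A "\<lambda>i. \<bar>f i\<bar>", OF abs_le_square_int] by linarith

lemma zero_or_one_if_sum_squares_eq_sum_int:
  fixes f :: "'a \<Rightarrow> int"
  assumes "finite A" and "(\<Sum>i\<in>A. (f i)\<^sup>2) = (\<Sum>i\<in>A. f i)" and "i \<in> A"
  shows "f i = 0 \<or> f i = 1"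
proof -
  have nonneg: "\<forall>j\<in>A. 0 \<le> (f j)\<^sup>2 - f j"
    using abs_le_square_int abs_ge_self order_trans by (metis diff_ge_0_iff_ge)
  have "(\<Sum>j\<in>A. (f j)\<^sup>2 - f j) = 0"
    unfolding sum_subtractf assms(2) by simp
  then have "(f i)\<^sup>2 - f i = 0"
    using sum_nonneg_eq_0_iff[OF assms(1), of "\<lambda>j. (f j)\<^sup>2 - f j"] nonneg assms(3) by simp
  then have "f i * (f i - 1) = 0"
    by (simp add: power2_eq_square algebra_simps)
  then show ?thesis
    by simp
qed

lemma unit_vector_if_sum_eq_1_and_sum_squares_eq_1_int:
  fixes f :: "'a \<Rightarrow> int"
  assumes A: "finite A" and sum: "(\<Sum>i\<in>A. f i) = 1" and sum_squares: "(\<Sum>i\<in>A. (f i)\<^sup>2) = 1"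
  shows "\<exists>i\<in>A. \<forall>j\<in>A. f j = (if j = i then 1 else 0)"
proof -
  have f01: "f j = 0 \<or> f j = 1" if "j \<in> A" for j
    using zero_or_one_if_sum_squares_eq_sum_int[OF A _ that] sum sum_squares by simp
  obtain i where "i \<in> A" "f i \<noteq> 0"
    using sum sum.neutral[of A f] by (metis zero_neq_one)
  with f01 have i: "i \<in> A" "f i = 1"
    by auto
  have nonneg: "\<forall>j\<in>A. 0 \<le> f j"
    using f01 by force
  have others: "f j = 0" if j: "j \<in> A" "j \<noteq> i" for j
  proof -
    have "f i + f j = (\<Sum>k\<in>{i, j}. f k)"
      using j by simp
    also have "\<dots> \<le> (\<Sum>k\<in>A. f k)"
      by (rule sum_mono2) (use A i j nonneg in auto)
    finally show ?thesis
      using i sum f01[OF j(1)] by linarith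
  qed
  show ?thesis
    using i others by (intro bexI[of _ i] ballI) simp_all
qed

lemma inter_uniform_left:
  "inter n (k, \<lambda>i. 1) (d, m) = k * d - (\<Sum>i\<in>{1..n}. m i)"
  by (simp add: inter_def)

lemma inter_uniform_canon: "inter n (k, \<lambda>i. 1) canon = int n - 3 * k"
  by (simp add: inter_def canon_def)

lemma chi_eq:
  "chi n (d, m) = 1 + (d * d + 3 * d - (\<Sum>i\<in>{1..n}. (m i)\<^sup>2) - (\<Sum>i\<in>{1..n}. m i)) div 2"
  by (simp add: chi_def inter_def canon_def sum_negf power2_eq_square algebra_simps)

lemma chi_ge_2_iff:
  "2 \<le> chi n (d, m) \<longleftrightarrow> 2 \<le> d * d + 3 * d - (\<Sum>i\<in>{1..n}. (m i)\<^sup>2) - (\<Sum>i\<in>{1..n}. m i)"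
  unfolding chi_eq by linarith

lemma numerical_line_class_25:
  fixes d s q :: int
  assumes d: "0 \<le> d" and chi: "2 \<le> d * d + 3 * d - q - s" and B: "5 * d - 4 \<le> s"
    and cauchy_schwarz: "s\<^sup>2 \<le> 25 * q" and abs_s: "\<bar>s\<bar> \<le> q"
  shows "d = 1 \<and> s = 1 \<and> q = 1"
proof -
  have "d \<le> 3"
  proof (rule ccontr)
    assume "\<not> d \<le> 3"
    then have "(5 * d - 4)\<^sup>2 \<le> s\<^sup>2"
      using B by (intro power_mono) auto
    then have "(5 * d - 4)\<^sup>2 + 25 * (5 * d - 4) \<le> 25 * (d * d) + 75 * d - 50"
      using B chi cauchy_schwarz by (smt (verit))
    with \<open>\<not> d \<le> 3\<close> show False
      by (simp add: power2_eq_square algebra_simps)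
  qed
  then have "d = 0 \<or> d = 1 \<or> d = 2 \<or> d = 3"
    using d by auto
  then show ?thesis
    using chi B abs_s by auto
qed

lemma mult_ge_nonpos: "m \<le> 0 \<Longrightarrow> mult_ge d c p m"
  by (simp add: mult_ge_def)

lemma mult_ge_1_iff: "mult_ge d c p 1 \<longleftrightarrow> hderiv d c 0 0 0 p = 0"
proof -
  have "int (k1 + k2 + k3) < 1 \<longleftrightarrow> k1 = 0 \<and> k2 = 0 \<and> k3 = 0" for k1 k2 k3
    by auto
  then show ?thesis
    unfolding mult_ge_def by auto
qed

lemma effective_line_class:
  assumes i: "i \<in> {1..n}" and chart: "snd (snd (P i)) = 1"
    and m: "\<forall>j\<in>{1..n}. m j = (if j = i then 1 else 0)"
  shows "effective n P 1 m"
proof -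
  \<comment> \<open>the line \<open>x = x\<^sub>i z\<close> through \<open>P i = (x\<^sub>i, y\<^sub>i, 1)\<close>\<close>
  define c :: "nat \<Rightarrow> nat \<Rightarrow> complex" where
    "c a b = (if a = 1 \<and> b = 0 then 1 else if a = 0 \<and> b = 0 then - fst (P i) else 0)" for a b
  have "nonzero_form 1 c"
    unfolding nonzero_form_def c_def by (intro exI[of _ 1] exI[of _ 0]) simp
  moreover have "hderiv 1 c 0 0 0 (P i) = 0"
    using chart by (simp add: hderiv_def c_def ffall_def atMost_Suc)
  then have "mult_ge 1 c (P j) (m j)" if "j \<in> {1..n}" for j
    using m that by (cases "j = i") (simp_all add: mult_ge_1_iff mult_ge_nonpos)
  ultimately show ?thesis
    unfolding effective_def by auto
qed

lemma line_classes_25_iff: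
  assumes chart: "\<forall>i\<in>{1..25}. snd (snd (P i)) = 1"
  shows "(effective 25 P d m \<and> chi 25 (d, m) \<ge> 2
            \<and> 2 * inter 25 (5, \<lambda>i. 1) (d, m) < inter 25 (5, \<lambda>i. 1) canon)
         \<longleftrightarrow> (d = 1 \<and> (\<exists>i\<in>{1..25}. \<forall>j\<in>{1..25}. m j = (if j = i then 1 else 0)))"
    (is "?numerical \<longleftrightarrow> ?line")
proof
  assume numerical: ?numerical
  define s where "s = (\<Sum>i\<in>{1..25::nat}. m i)"
  define q where "q = (\<Sum>i\<in>{1..25::nat}. (m i)\<^sup>2)"
  have "0 \<le> d"
    using numerical by (simp add: effective_def)
  moreover have "2 \<le> d * d + 3 * d - q - s"
    using numerical by (simp add: chi_ge_2_iff s_def q_def)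
  moreover have "5 * d - 4 \<le> s"
    using numerical by (simp add: inter_uniform_left inter_uniform_canon s_def)
  moreover have "s\<^sup>2 \<le> 25 * q"
    using sum_squared_le_card_mult_sum_squares_int[of m "{1..25::nat}"] by (simp add: s_def q_def)
  moreover have "\<bar>s\<bar> \<le> q"
    unfolding s_def q_def by (rule abs_sum_le_sum_squares_int)
  ultimately have "d = 1 \<and> s = 1 \<and> q = 1"
    by (rule numerical_line_class_25)
  then show ?line
    using unit_vector_if_sum_eq_1_and_sum_squares_eq_1_int[of "{1..25::nat}" m] by (simp add: s_def q_def)
next
  assume ?line
  then obtain i where d: "d = 1" and i: "i \<in> {1..25}"
    and m: "\<forall>j\<in>{1..25}. m j = (if j = i then 1 else 0)"
    by blast
  have unit: "m j = (if j = i then 1 else 0)" "(m j)\<^sup>2 = (if j = i then 1 else 0)"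
    if "j \<in> {1..25}" for j
    using m that by auto
  have "(\<Sum>j\<in>{1..25::nat}. m j) = 1" and "(\<Sum>j\<in>{1..25::nat}. (m j)\<^sup>2) = 1"
    using i by (simp_all only: sum.cong[OF refl unit(1)] sum.cong[OF refl unit(2)]) simp_all
  moreover have "effective 25 P 1 m"
    using i chart m by (intro effective_line_class) auto
  ultimately show ?numerical
    using d by (simp add: chi_ge_2_iff inter_uniform_left inter_uniform_canon)
qed

theorem theorem4p15:
  shows "very_general 50 (\<lambda>v. \<forall>(d::int) (m::nat \<Rightarrow> int).
     (effective 25 (pts v) d m \<and> chi 25 (d, m) \<ge> 2
        \<and> 2 * inter 25 (5, \<lambda>i. 1) (d, m) < inter 25 (5, \<lambda>i. 1) canon)
     \<longleftrightarrow> (d = 1 \<and> (\<exists>i\<in>{1..25}. \<forall>j\<in>{1..25}. m j = (if j = i then 1 else 0))))"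
  unfolding very_general_def
  by (intro exI[of _ "{}"]) (simp add: line_classes_25_iff pts_def)

end
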